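(* Let $G$ be a finite group, $H\le G$ and $p$ a prime. Then $\mathfrak{p}_{H,p}=\mathfrak{p}_{O^p(H),p}$ as ideals of the Burnside $G$-Tambara functor $\underline{A}_G$.
   Context: $A(H)$ is the Burnside ring of a finite group $H$; for $I\le H$, $\varphi^I_{H,p}\colon A(H)\to\mathbb{Z}/p\mathbb{Z}$ is the ring map $X\mapsto|X^I|\bmod p$. $\underline{A}_G$ has $\underline{A}_G(G/L)=A(L)$ (with restrictions, transfers $K\times_L-$, norms $\mathrm{Map}_L(K,-)$ and conjugations). For $K\le G$, $\mathfrak{p}_{K,p}$ is the ideal with $\mathfrak{p}_{K,p}(G/L)=\bigcap_{I\le L,\ I\preccurlyeq_GK}\ker(\varphi^I_{L,p})$, where $I\preccurlyeq_GK$ means $I$ is conjugate in $G$ to a subgroup of $K$. $O^p(H)$ is the intersection of all normal subgroups of $H$ of $p$-power index. *)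

theory Defs
  imports "HOL-Algebra.Algebra"
begin

text \<open>All subgroups are subgroups of a fixed ambient group G (HOL-Algebra locale style).\<close>

definition conjset :: "('a, 'b) monoid_scheme \<Rightarrow> 'a \<Rightarrow> 'a set \<Rightarrow> 'a set" where
  "conjset G g J = {g \<otimes>\<^bsub>G\<^esub> j \<otimes>\<^bsub>G\<^esub> inv\<^bsub>G\<^esub> g | j. j \<in> J}"

definition subconj :: "('a, 'b) monoid_scheme \<Rightarrow> 'a set \<Rightarrow> 'a set \<Rightarrow> bool" where
  "subconj G I K \<longleftrightarrow> (\<exists>g\<in>carrier G. conjset G g I \<subseteq> K)"

definition conj_class :: "('a, 'b) monoid_scheme \<Rightarrow> 'a set \<Rightarrow> 'a set \<Rightarrow> 'a set set" where
  "conj_class G L J = (\<lambda>g. conjset G g J) ` L"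

text \<open>Isomorphism classes of transitive L-sets = L-conjugacy classes of subgroups of L.\<close>
definition subgroup_classes :: "('a, 'b) monoid_scheme \<Rightarrow> 'a set \<Rightarrow> 'a set set set" where
  "subgroup_classes G L = {conj_class G L J | J. subgroup J G \<and> J \<subseteq> L}"

text \<open>The Burnside ring A(L): the free abelian group on isomorphism classes of transitive
  L-sets L/J, i.e. integer-valued functions on L-conjugacy classes of subgroups of L
  (zero elsewhere); [X] corresponds to its orbit-type multiplicities.\<close>
definition burnside :: "('a, 'b) monoid_scheme \<Rightarrow> 'a set \<Rightarrow> ('a set set \<Rightarrow> int) set" where
  "burnside G L = {x. \<forall>C. C \<notin> subgroup_classes G L \<longrightarrow> x C = 0}"

definition mark :: "('a, 'b) monoid_scheme \<Rightarrow> 'a set \<Rightarrow> 'a set \<Rightarrow> 'a set \<Rightarrow> nat" where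
  "mark G L I J = card {C \<in> {l_coset G g J | g. g \<in> L}. \<forall>i\<in>I. l_coset G i C = C}"

text \<open>phi^I_{L,p}: A(L) -> Z/pZ, X |-> |X^I| mod p, extended additively
  (values in Z/pZ represented by residues in int).\<close>
definition phi :: "('a, 'b) monoid_scheme \<Rightarrow> 'a set \<Rightarrow> nat \<Rightarrow> 'a set \<Rightarrow> ('a set set \<Rightarrow> int) \<Rightarrow> int" where
  "phi G L p I x =
     (\<Sum>C\<in>subgroup_classes G L. x C * int (mark G L I (SOME J. J \<in> C))) mod int p"

text \<open>The ideal p_{K,p} of the Burnside Tambara functor, evaluated at G/L.\<close>
definition pideal :: "('a, 'b) monoid_scheme \<Rightarrow> 'a set \<Rightarrow> nat \<Rightarrow> 'a set \<Rightarrow> ('a set set \<Rightarrow> int) set" where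
  "pideal G K p L = {x \<in> burnside G L.
      \<forall>I. subgroup I G \<and> I \<subseteq> L \<and> subconj G I K \<longrightarrow> phi G L p I x = 0}"

definition Op :: "('a, 'b) monoid_scheme \<Rightarrow> nat \<Rightarrow> 'a set \<Rightarrow> 'a set" where
  "Op G p H = \<Inter>{N. N \<lhd> (G\<lparr>carrier := H\<rparr>) \<and>
                    (\<exists>k. card (rcosets\<^bsub>G\<lparr>carrier := H\<rparr>\<^esub> N) = p ^ k)}"

end

theory Submission
  imports Defs
begin

(*
  Let I \<le> L with g I g\<inverse> \<le> H. Normal subgroups of p-power index are closed under
  intersection (second isomorphism theorem), so O\<^sup>p(H) is itself normal of p-power index
  in H. Hence A = I \<inter> g\<inverse> O\<^sup>p(H) g is a normal subgroup of p-power index of I, and A is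
  subconjugate to O\<^sup>p(H). The p-group I/A acts on the A-fixed cosets of L/J with fixed set
  (L/J)\<^sup>I, and all its orbits have p-power size, so |(L/J)\<^sup>I| = |(L/J)\<^sup>A| mod p. Thus
  \<phi>\<^sup>I = \<phi>\<^sup>A on A(L), and \<phi>\<^sup>A vanishes on the ideal of O\<^sup>p(H). The other inclusion
  holds because O\<^sup>p(H) \<le> H.
*)

definition normal_p_power_index :: "('a, 'b) monoid_scheme \<Rightarrow> nat \<Rightarrow> 'a set set" where
  "normal_p_power_index G p = {N. N \<lhd> G \<and> (\<exists>k. card (rcosets\<^bsub>G\<^esub> N) = p ^ k)}"

lemma Op_eq_Inter_normal_p_power_index:
  "Op G p H = \<Inter> (normal_p_power_index (G\<lparr>carrier := H\<rparr>) p)"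
  by (simp add: Op_def normal_p_power_index_def)

lemma (in group) card_rcosets_mult_card:
  assumes "subgroup I G" and "subgroup A G" and "A \<subseteq> I"
  shows "card (rcosets\<^bsub>G\<lparr>carrier := I\<rparr>\<^esub> A) * card A = card I"
  using group.lagrange[OF subgroup_imp_group[OF assms(1)] subgroup_incl[OF assms(2,1,3)]]
  by (simp add: order_def)

lemma (in group) normal_conj_closed:
  assumes "subgroup H G" and "N \<lhd> G\<lparr>carrier := H\<rparr>" and "x \<in> H" and "n \<in> N"
  shows "x \<otimes> n \<otimes> inv x \<in> N"
  using normal.inv_op_closed2[OF assms(2), of x n] assms(3,4) m_inv_consistent[OF assms(1,3)] by simp

lemma (in group) normal_in_subgroupI:
  assumes "subgroup I G" and "subgroup A G" and "A \<subseteq> I"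
    and "\<And>x n. x \<in> I \<Longrightarrow> n \<in> A \<Longrightarrow> x \<otimes> n \<otimes> inv x \<in> A"
  shows "A \<lhd> G\<lparr>carrier := I\<rparr>"
  using assms
  by (intro group.normal_invI subgroup_imp_group subgroup_incl) (auto simp: m_inv_consistent)

lemma (in group) card_rcosets_Int_normal_dvd:
  assumes fin: "finite (carrier G)" and N: "N \<lhd> G" and B: "subgroup B G"
  shows "card (rcosets\<^bsub>G\<lparr>carrier := B\<rparr>\<^esub> (B \<inter> N)) dvd card (rcosets N)"
proof -
  interpret second_isomorphism_grp N G B
    using N B by (simp add: second_isomorphism_grp_def second_isomorphism_grp_axioms_def)
  have subN: "subgroup N G" using N by (rule normal_imp_subgroup)
  have "G\<lparr>carrier := B\<rparr> Mod (N \<inter> B) \<cong> G\<lparr>carrier := N <#> B\<rparr> Mod N"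
    using normal_intersection_quotient_isom by (rule is_isoI)
  then have "card (rcosets\<^bsub>G\<lparr>carrier := B\<rparr>\<^esub> (B \<inter> N))
      = card (rcosets\<^bsub>G\<lparr>carrier := N <#> B\<rparr>\<^esub> N)"
    by (auto dest!: iso_same_card simp: FactGroup_def Int_commute)
  moreover have "card (rcosets\<^bsub>G\<lparr>carrier := N <#> B\<rparr>\<^esub> N) * card N = card (N <#> B)"
    using card_rcosets_mult_card[OF normal_set_mult_subgroup subN H_contained_in_set_mult] .
  moreover have "card (rcosets (N <#> B)) * card (N <#> B) = card (rcosets N) * card N"
    using lagrange[OF normal_set_mult_subgroup] lagrange[OF subN] by simp
  moreover have "card N > 0"
    using subN fin by (rule subgroup.finite_imp_card_positive)
  ultimately have "card (rcosets N) * card N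
      = card (rcosets (N <#> B)) * card (rcosets\<^bsub>G\<lparr>carrier := B\<rparr>\<^esub> (B \<inter> N)) * card N"
    by (metis mult.assoc)
  with \<open>card N > 0\<close> show ?thesis by simp
qed

lemma (in group) carrier_in_normal_p_power_index:
  assumes "finite (carrier G)"
  shows "carrier G \<in> normal_p_power_index G p"
proof -
  have "card (rcosets (carrier G)) * card (carrier G) = card (carrier G)"
    using lagrange[OF subgroup_self] by (simp add: order_def)
  moreover have "card (carrier G) > 0"
    using subgroup_self assms by (rule subgroup.finite_imp_card_positive)
  ultimately have "card (rcosets (carrier G)) = p ^ 0" by simp
  then show ?thesis
    unfolding normal_p_power_index_def using normal_self by blast
qed

lemma (in group) normal_p_power_index_Int_subgroup:
  assumes fin: "finite (carrier G)" and p: "Factorial_Ring.prime p"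
    and N: "N \<in> normal_p_power_index G p" and B: "subgroup B G"
  shows "B \<inter> N \<in> normal_p_power_index (G\<lparr>carrier := B\<rparr>) p"
proof -
  obtain k where nN: "N \<lhd> G" and iN: "card (rcosets N) = p ^ k"
    using N by (auto simp: normal_p_power_index_def)
  have "B \<inter> N \<lhd> G\<lparr>carrier := B\<rparr>"
    using normal_Int_subgroup[OF B nN] by (simp add: Int_commute)
  moreover obtain c where "card (rcosets\<^bsub>G\<lparr>carrier := B\<rparr>\<^esub> (B \<inter> N)) = p ^ c"
    using card_rcosets_Int_normal_dvd[OF fin nN B] iN divides_primepow_nat[OF p] by auto
  ultimately show ?thesis by (auto simp: normal_p_power_index_def)
qed

lemma (in group) normal_p_power_index_Int:
  assumes fin: "finite (carrier G)" and p: "Factorial_Ring.prime p"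
    and N: "N \<in> normal_p_power_index G p" and M: "M \<in> normal_p_power_index G p"
  shows "N \<inter> M \<in> normal_p_power_index G p"
proof -
  obtain a b where nN: "N \<lhd> G" and iN: "card (rcosets N) = p ^ a"
    and nM: "M \<lhd> G" and iM: "card (rcosets M) = p ^ b"
    using N M by (auto simp: normal_p_power_index_def)
  have subN: "subgroup N G" and subM: "subgroup M G"
    using nN nM by (auto intro: normal_imp_subgroup)
  have subNM: "subgroup (N \<inter> M) G" using subN subM by (rule subgroups_Inter_pair)
  have nNM: "N \<inter> M \<lhd> G"
    using nN nM by (auto intro!: normal_invI subNM intro: normal.inv_op_closed2)
  obtain c where iNM: "card (rcosets\<^bsub>G\<lparr>carrier := N\<rparr>\<^esub> (N \<inter> M)) = p ^ c"
    using normal_p_power_index_Int_subgroup[OF fin p M subN]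
    by (auto simp: normal_p_power_index_def)
  have "card (rcosets (N \<inter> M)) * card (N \<inter> M) = card (rcosets N) * card N"
    using lagrange[OF subNM] lagrange[OF subN] by simp
  also have "\<dots> = p ^ (a + c) * card (N \<inter> M)"
    using card_rcosets_mult_card[OF subN subNM Int_lower1] iN iNM by (simp add: power_add)
  finally have "card (rcosets (N \<inter> M)) = p ^ (a + c)"
    using subgroup.finite_imp_card_positive[OF subNM fin] by simp
  with nNM show ?thesis by (auto simp: normal_p_power_index_def)
qed

lemma (in group) Inter_normal_p_power_index_mem:
  assumes fin: "finite (carrier G)" and p: "Factorial_Ring.prime p"
  shows "\<Inter> (normal_p_power_index G p) \<in> normal_p_power_index G p"
proof -
  have "normal_p_power_index G p \<subseteq> Pow (carrier G)"
    by (auto simp: normal_p_power_index_def dest: normal_imp_subgroup subgroup.subset)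
  then have "finite (normal_p_power_index G p)"
    using fin by (simp add: finite_subset)
  moreover have "normal_p_power_index G p \<noteq> {}"
    using carrier_in_normal_p_power_index[OF fin] by blast
  moreover have "\<Inter> S \<in> normal_p_power_index G p"
    if "finite S" "S \<noteq> {}" "S \<subseteq> normal_p_power_index G p" for S
    using that
  proof (induction S rule: finite_ne_induct)
    case (insert N S)
    then show ?case using normal_p_power_index_Int[OF fin p] by simp
  qed simp
  ultimately show ?thesis by blast
qed

lemma (in group) Op_normal_p_power_index:
  assumes "finite (carrier G)" and "subgroup H G" and "Factorial_Ring.prime p"
  shows "Op G p H \<in> normal_p_power_index (G\<lparr>carrier := H\<rparr>) p"
  unfolding Op_eq_Inter_normal_p_power_index
  using group.Inter_normal_p_power_index_mem[OF subgroup_imp_group[OF assms(2)] _ assms(3)]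
    assms(1) subgroup.subset[OF assms(2)]
  by (simp add: finite_subset)

lemma (in group) normal_p_power_index_subgroup:
  assumes "subgroup I G" and "A \<in> normal_p_power_index (G\<lparr>carrier := I\<rparr>) p"
  shows "subgroup A G" and "A \<subseteq> I"
proof -
  have "subgroup A (G\<lparr>carrier := I\<rparr>)"
    using assms(2) by (auto simp: normal_p_power_index_def intro: normal_imp_subgroup)
  then show "subgroup A G" and "A \<subseteq> I"
    using incl_subgroup[OF assms(1)] subgroup.subset by fastforce+
qed

lemma (in group) conjset_subgroup:
  assumes "g \<in> carrier G" and "subgroup A G"
  shows "subgroup (conjset G g A) G"
proof -
  have "conjset G g A = g <# A #> inv g"
    using assms subgroup.subset[OF assms(2)] by (auto simp: conjset_def l_coset_def r_coset_def)
  then show ?thesis using subgroup_conjugation_is_surj2[OF assms] by simp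
qed

lemma (in group) card_conjset:
  assumes "g \<in> carrier G" and "A \<subseteq> carrier G"
  shows "card (conjset G g A) = card A"
proof -
  have "conjset G g A = (\<lambda>a. g \<otimes> a \<otimes> inv g) ` A" by (auto simp: conjset_def)
  moreover have "inj_on (\<lambda>a. g \<otimes> a \<otimes> inv g) A"
    using assms by (auto intro: inj_onI dest: conjugation_is_inj)
  ultimately show ?thesis by (simp add: card_image)
qed

lemma (in group) conjset_inv_conjset:
  assumes g: "g \<in> carrier G" and A: "A \<subseteq> carrier G"
  shows "conjset G (inv g) (conjset G g A) = A"
proof -
  have cancel: "inv g \<otimes> (g \<otimes> a \<otimes> inv g) \<otimes> inv (inv g) = a" if "a \<in> A" for a
    using g A that by (auto simp: m_assoc simp flip: m_assoc[of "inv g" g])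
  show ?thesis
  proof
    show "conjset G (inv g) (conjset G g A) \<subseteq> A"
      using cancel by (auto simp: conjset_def)
    show "A \<subseteq> conjset G (inv g) (conjset G g A)"
    proof
      fix a assume a: "a \<in> A"
      have "g \<otimes> a \<otimes> inv g \<in> conjset G g A" using a by (auto simp: conjset_def)
      then show "a \<in> conjset G (inv g) (conjset G g A)"
        using cancel[OF a] unfolding conjset_def by force
    qed
  qed
qed

lemma (in group) conjset_normal_p_power_index:
  assumes fin: "finite (carrier G)" and g: "g \<in> carrier G" and I: "subgroup I G"
    and A: "A \<in> normal_p_power_index (G\<lparr>carrier := I\<rparr>) p"
  shows "conjset G g A \<in> normal_p_power_index (G\<lparr>carrier := conjset G g I\<rparr>) p"
proof -
  obtain k where nA: "A \<lhd> G\<lparr>carrier := I\<rparr>" and iA: "card (rcosets\<^bsub>G\<lparr>carrier := I\<rparr>\<^esub> A) = p ^ k"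
    using A by (auto simp: normal_p_power_index_def)
  have subA: "subgroup A G" and AI: "A \<subseteq> I"
    using normal_p_power_index_subgroup[OF I A] by auto
  have Ic: "I \<subseteq> carrier G" using I by (rule subgroup.subset)
  have gAI: "conjset G g A \<subseteq> conjset G g I" using AI by (auto simp: conjset_def)
  have "conjset G g A \<lhd> G\<lparr>carrier := conjset G g I\<rparr>"
  proof (rule normal_in_subgroupI[OF conjset_subgroup[OF g I] conjset_subgroup[OF g subA] gAI])
    fix x n assume "x \<in> conjset G g I" and "n \<in> conjset G g A"
    then obtain i a where i: "i \<in> I" and a: "a \<in> A"
      and x: "x = g \<otimes> i \<otimes> inv g" and n: "n = g \<otimes> a \<otimes> inv g"
      by (auto simp: conjset_def)
    have "x \<otimes> n \<otimes> inv x = g \<otimes> (i \<otimes> a \<otimes> inv i) \<otimes> inv g"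
      using g i a Ic AI unfolding x n
      by (simp add: subset_eq m_assoc inv_mult_group flip: m_assoc[of "inv g" g])
    moreover have "i \<otimes> a \<otimes> inv i \<in> A" using I nA i a by (rule normal_conj_closed)
    ultimately show "x \<otimes> n \<otimes> inv x \<in> conjset G g A" by (auto simp: conjset_def)
  qed
  moreover have "card (rcosets\<^bsub>G\<lparr>carrier := conjset G g I\<rparr>\<^esub> (conjset G g A)) = p ^ k"
  proof -
    have "card (rcosets\<^bsub>G\<lparr>carrier := conjset G g I\<rparr>\<^esub> (conjset G g A)) * card A = p ^ k * card A"
      using card_rcosets_mult_card[OF conjset_subgroup[OF g I] conjset_subgroup[OF g subA] gAI]
        card_rcosets_mult_card[OF I subA AI] iA card_conjset[OF g] Ic AI
      by (metis dual_order.trans)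
    moreover have "card A > 0"
      using subA fin by (rule subgroup.finite_imp_card_positive)
    ultimately show ?thesis by simp
  qed
  ultimately show ?thesis by (auto simp: normal_p_power_index_def)
qed

lemma (in group) subconj_imp_normal_p_power_index_subconj_Op:
  assumes fin: "finite (carrier G)" and H: "subgroup H G" and p: "Factorial_Ring.prime p"
    and I: "subgroup I G" and "subconj G I H"
  shows "\<exists>A \<in> normal_p_power_index (G\<lparr>carrier := I\<rparr>) p. subconj G A (Op G p H)"
proof -
  let ?O = "Op G p H"
  obtain g where g: "g \<in> carrier G" and IH: "conjset G g I \<subseteq> H"
    using \<open>subconj G I H\<close> by (auto simp: subconj_def)
  let ?B = "conjset G g I"
  have B: "subgroup ?B G" using g I by (rule conjset_subgroup)
  have "?B \<inter> ?O \<in> normal_p_power_index (G\<lparr>carrier := ?B\<rparr>) p"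
    using group.normal_p_power_index_Int_subgroup[OF subgroup_imp_group[OF H] _ p
        Op_normal_p_power_index[OF fin H p] subgroup_incl[OF B H IH]]
      fin subgroup.subset[OF H]
    by (simp add: finite_subset)
  then have "conjset G (inv g) (?B \<inter> ?O) \<in> normal_p_power_index (G\<lparr>carrier := I\<rparr>) p"
    using conjset_normal_p_power_index[OF fin inv_closed[OF g] B]
      conjset_inv_conjset[OF g subgroup.subset[OF I]]
    by simp
  moreover have "conjset G g (conjset G (inv g) (?B \<inter> ?O)) \<subseteq> ?O"
    using conjset_inv_conjset[OF inv_closed[OF g], of "?B \<inter> ?O"] subgroup.subset[OF B] g
    by auto
  ultimately show ?thesis using g unfolding subconj_def by blast
qed

lemma group_actionI:
  assumes K: "group K"
    and closed: "\<And>g x. g \<in> carrier K \<Longrightarrow> x \<in> E \<Longrightarrow> act g x \<in> E"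
    and one: "\<And>x. x \<in> E \<Longrightarrow> act \<one>\<^bsub>K\<^esub> x = x"
    and mult: "\<And>g h x. g \<in> carrier K \<Longrightarrow> h \<in> carrier K \<Longrightarrow> x \<in> E \<Longrightarrow>
      act (g \<otimes>\<^bsub>K\<^esub> h) x = act g (act h x)"
  shows "group_action K E (\<lambda>g. \<lambda>x\<in>E. act g x)"
proof -
  have bij: "(\<lambda>x\<in>E. act g x) \<in> Bij E" if g: "g \<in> carrier K" for g
  proof -
    have g': "inv\<^bsub>K\<^esub> g \<in> carrier K" using group.inv_closed[OF K g] .
    have "act (inv\<^bsub>K\<^esub> g) (act g x) = x" "act g (act (inv\<^bsub>K\<^esub> g) x) = x" if "x \<in> E" for x
      using mult[OF g' g that] mult[OF g g' that] one[OF that]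
      by (simp_all add: group.l_inv[OF K g] group.r_inv[OF K g])
    then have "bij_betw (act g) E E"
      by (intro bij_betwI[where g = "act (inv\<^bsub>K\<^esub> g)"]) (auto simp: closed g g')
    then show ?thesis by (simp add: Bij_def bij_betw_def inj_on_def)
  qed
  show ?thesis
    unfolding group_action_def group_hom_def group_hom_axioms_def
    by (intro conjI K group_BijGroup homI)
      (auto simp: BijGroup_def bij compose_def mult closed fun_eq_iff)
qed

lemma (in group_action) card_orbit_mult_card_dvd_order:
  assumes K: "subgroup K G" and trivial: "\<And>g x. g \<in> K \<Longrightarrow> x \<in> E \<Longrightarrow> \<phi> g x = x" and x: "x \<in> E"
  shows "card (orbit G \<phi> x) * card K dvd order G"
proof -
  interpret group G using group_hom by (rule group_hom.axioms(1))
  have S: "subgroup (stabilizer G \<phi> x) G" using x by (rule stabilizer_subgroup)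
  have "K \<subseteq> stabilizer G \<phi> x"
    using trivial x subgroup.subset[OF K] by (auto simp: stabilizer_def)
  then have "card K dvd card (stabilizer G \<phi> x)"
    using card_rcosets_mult_card[OF S K] by (metis dvd_triv_right)
  then show ?thesis
    using orbit_stabilizer_theorem[OF x] by (metis mult_dvd_mono dvd_refl)
qed

lemma (in group_action) card_fixed_points_mod:
  assumes fin: "finite E" and p: "Factorial_Ring.prime p"
    and orbit_dvd: "\<And>x. x \<in> E \<Longrightarrow> card (orbit G \<phi> x) dvd p ^ k"
  shows "card {x \<in> E. \<forall>g \<in> carrier G. \<phi> g x = x} mod p = card E mod p"
proof -
  define fixed where "fixed x \<longleftrightarrow> (\<forall>g \<in> carrier G. \<phi> g x = x)" for x
  define f where "f x = (if fixed x then 1 else 0 :: nat)" for x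
  have same_orbit: "orbit G \<phi> y = orbit G \<phi> x" if x: "x \<in> E" and y: "y \<in> orbit G \<phi> x" for x y
  proof -
    have yE: "y \<in> E" using x y element_image by (auto simp: orbit_def)
    have "z \<in> E" if "z \<in> orbit G \<phi> x \<or> z \<in> orbit G \<phi> y" for z
      using that x yE element_image by (auto simp: orbit_def)
    then show ?thesis
      using orbit_sym orbit_trans x y yE by blast
  qed
  have fixed_iff: "fixed x \<longleftrightarrow> orbit G \<phi> x = {x}" if x: "x \<in> E" for x
    using orbit_refl[OF x] by (auto simp: fixed_def orbit_def)
  have orbit_sum: "(\<Sum>y\<in>orb. f y) mod p = card orb mod p" if orb: "orb \<in> orbits G E \<phi>" for orb
  proof -
    obtain x where x: "x \<in> E" and orb_eq: "orb = orbit G \<phi> x"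
      using orb by (auto simp: orbits_def)
    show ?thesis
    proof (cases "fixed x")
      case True
      then show ?thesis using fixed_iff[OF x] orb_eq by (simp add: f_def)
    next
      case False
      have "\<not> fixed y" if y: "y \<in> orb" for y
      proof
        assume "fixed y"
        moreover have "y \<in> E" using y x element_image by (auto simp: orb_eq orbit_def)
        ultimately have "orbit G \<phi> x = {y}"
          using fixed_iff same_orbit[OF x] y orb_eq by simp
        then show False using False fixed_iff[OF x] orbit_refl[OF x] by simp
      qed
      then have sum_zero: "(\<Sum>y\<in>orb. f y) = 0" by (simp add: f_def)
      have "card orb \<noteq> 1"
        using False fixed_iff[OF x] orbit_refl[OF x] orb_eq by (auto simp: card_1_singleton_iff)
      moreover obtain j where "card orb = p ^ j"
        using orbit_dvd[OF x] divides_primepow_nat[OF p] orb_eq by auto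
      ultimately have "p dvd card orb"
        by (metis dvd_power neq0_conv power_0)
      with sum_zero show ?thesis by simp
    qed
  qed
  have "card {x \<in> E. fixed x} = (\<Sum>x\<in>E. f x)"
    using fin by (simp add: card_as_sums f_def)
  also have "\<dots> = (\<Sum>orb\<in>orbits G E \<phi>. \<Sum>y\<in>orb. f y)"
    by (rule disjoint_sum[OF fin, symmetric])
  finally have "card {x \<in> E. fixed x} mod p = (\<Sum>orb\<in>orbits G E \<phi>. (\<Sum>y\<in>orb. f y) mod p) mod p"
    by (simp add: mod_sum_eq)
  also have "\<dots> = (\<Sum>orb\<in>orbits G E \<phi>. card orb mod p) mod p"
    using orbit_sum by simp
  also have "\<dots> = (\<Sum>orb\<in>orbits G E \<phi>. \<Sum>y\<in>orb. 1) mod p"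
    by (simp add: mod_sum_eq)
  also have "\<dots> = card E mod p"
    using disjoint_sum[OF fin, of "\<lambda>_. 1 :: nat"] by simp
  finally show ?thesis by (simp add: fixed_def)
qed

lemma (in group) l_coset_fixed_by_normal:
  assumes I: "subgroup I G" and nA: "A \<lhd> G\<lparr>carrier := I\<rparr>" and C: "C \<subseteq> carrier G"
    and fixed: "\<And>a. a \<in> A \<Longrightarrow> l_coset G a C = C" and i: "i \<in> I" and a: "a \<in> A"
  shows "l_coset G a (l_coset G i C) = l_coset G i C"
proof -
  have ic: "i \<in> carrier G" using I i by (rule subgroup.mem_carrier)
  have ac: "a \<in> carrier G"
    using incl_subgroup[OF I normal_imp_subgroup[OF nA]] a by (rule subgroup.mem_carrier)
  have "inv i \<otimes> a \<otimes> inv (inv i) \<in> A"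
    using normal_conj_closed[OF I nA] subgroup.m_inv_closed[OF I i] a by blast
  then have conj_fixes: "l_coset G (inv i \<otimes> a \<otimes> i) C = C" using ic fixed by simp
  have "l_coset G a (l_coset G i C) = l_coset G (i \<otimes> (inv i \<otimes> a \<otimes> i)) C"
    using ic ac C by (simp add: lcos_m_assoc m_assoc flip: m_assoc[of i "inv i"])
  also have "\<dots> = l_coset G i C"
    using ic ac C conj_fixes by (simp add: lcos_m_assoc[symmetric])
  finally show ?thesis .
qed

lemma (in group) mark_mod_normal_p_power_index:
  assumes fin: "finite (carrier G)" and L: "subgroup L G" and I: "subgroup I G" and IL: "I \<subseteq> L"
    and p: "Factorial_Ring.prime p" and A: "A \<in> normal_p_power_index (G\<lparr>carrier := I\<rparr>) p"
    and J: "J \<subseteq> carrier G"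
  shows "mark G L I J mod p = mark G L A J mod p"
proof -
  obtain k where nA: "A \<lhd> G\<lparr>carrier := I\<rparr>" and iA: "card (rcosets\<^bsub>G\<lparr>carrier := I\<rparr>\<^esub> A) = p ^ k"
    using A by (auto simp: normal_p_power_index_def)
  have subA: "subgroup A G" and AI: "A \<subseteq> I"
    using normal_p_power_index_subgroup[OF I A] by auto
  have Ic: "I \<subseteq> carrier G" and Lc: "L \<subseteq> carrier G"
    using I L by (auto dest: subgroup.subset)
  define Y where "Y = {l_coset G l J | l. l \<in> L}"
  define E where "E = {C \<in> Y. \<forall>a \<in> A. l_coset G a C = C}"
  let ?act = "\<lambda>i. \<lambda>C\<in>E. l_coset G i C"
  have Yc: "C \<subseteq> carrier G" if "C \<in> Y" for C
    using that Lc l_coset_subset_G[OF J] by (auto simp: Y_def)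
  have "finite Y"
    using fin Lc by (simp add: Y_def setcompr_eq_image finite_subset)
  then have finE: "finite E" by (simp add: E_def)
  have closed: "l_coset G i C \<in> E" if i: "i \<in> I" and C: "C \<in> E" for i C
  proof -
    obtain l where l: "l \<in> L" and Cl: "C = l_coset G l J" using C by (auto simp: E_def Y_def)
    have "l_coset G i C = l_coset G (i \<otimes> l) J" using Cl lcos_m_assoc[OF J] i l Ic Lc by blast
    moreover have "i \<otimes> l \<in> L" using subgroup.m_closed[OF L] i l IL by blast
    ultimately have "l_coset G i C \<in> Y" by (auto simp: Y_def)
    moreover have "C \<in> Y" and "\<forall>a \<in> A. l_coset G a C = C" using C by (auto simp: E_def)
    ultimately show ?thesis
      using l_coset_fixed_by_normal[OF I nA Yc _ i] by (simp add: E_def)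
  qed
  interpret action: group_action "G\<lparr>carrier := I\<rparr>" E ?act
  proof (rule group_actionI[OF subgroup_imp_group[OF I]])
    fix i h C assume "i \<in> carrier (G\<lparr>carrier := I\<rparr>)" "h \<in> carrier (G\<lparr>carrier := I\<rparr>)" "C \<in> E"
    then show "l_coset G (i \<otimes>\<^bsub>G\<lparr>carrier := I\<rparr>\<^esub> h) C = l_coset G i (l_coset G h C)"
      using Ic Yc[of C] lcos_m_assoc[of C i h] by (auto simp: E_def)
  qed (use closed Yc lcos_mult_one in \<open>auto simp: E_def\<close>)
  have orbit_dvd: "card (orbit (G\<lparr>carrier := I\<rparr>) ?act C) dvd p ^ k" if C: "C \<in> E" for C
  proof -
    have "card (orbit (G\<lparr>carrier := I\<rparr>) ?act C) * card A dvd p ^ k * card A"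
      using action.card_orbit_mult_card_dvd_order[OF normal_imp_subgroup[OF nA] _ C]
        card_rcosets_mult_card[OF I subA AI] iA
      by (simp add: E_def order_def)
    moreover have "card A > 0"
      using subA fin by (rule subgroup.finite_imp_card_positive)
    ultimately show ?thesis by simp
  qed
  have "card {C \<in> E. \<forall>i \<in> carrier (G\<lparr>carrier := I\<rparr>). ?act i C = C} mod p = card E mod p"
    using finE p orbit_dvd by (rule action.card_fixed_points_mod)
  moreover have "{C \<in> E. \<forall>i \<in> carrier (G\<lparr>carrier := I\<rparr>). ?act i C = C} = {C \<in> Y. \<forall>i \<in> I. l_coset G i C = C}"
    using AI by (auto simp: E_def)
  ultimately show ?thesis by (simp add: mark_def Y_def E_def)
qed

lemma (in group) phi_eq_if_mark_mod_eq:
  assumes L: "subgroup L G"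
    and marks: "\<And>J. J \<subseteq> carrier G \<Longrightarrow> mark G L I J mod p = mark G L A J mod p"
  shows "phi G L p I x = phi G L p A x"
proof -
  have term_eq: "x C * int (mark G L I (SOME J. J \<in> C)) mod int p
      = x C * int (mark G L A (SOME J. J \<in> C)) mod int p"
    if C_class: "C \<in> subgroup_classes G L" for C
  proof -
    obtain J0 where J0: "subgroup J0 G" and C: "C = conj_class G L J0"
      using C_class by (auto simp: subgroup_classes_def)
    have "C \<noteq> {}" using subgroup.one_closed[OF L] by (auto simp: C conj_class_def)
    then have "(SOME J. J \<in> C) \<in> C" by (simp add: some_in_eq)
    then obtain l where "l \<in> L" and "(SOME J. J \<in> C) = conjset G l J0"
      by (auto simp: C conj_class_def)
    then have "(SOME J. J \<in> C) \<subseteq> carrier G"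
      using subgroup.subset[OF L] subgroup.subset[OF J0] by (fastforce simp: conjset_def)
    then have "int (mark G L I (SOME J. J \<in> C)) mod int p = int (mark G L A (SOME J. J \<in> C)) mod int p"
      using marks by (metis of_nat_mod)
    then show ?thesis by (metis mod_mult_right_eq)
  qed
  show ?thesis
    unfolding phi_def by (subst (1 2) mod_sum_eq[symmetric]) (simp add: term_eq cong: sum.cong)
qed

lemma pideal_antimono: "K \<subseteq> K' \<Longrightarrow> pideal G K' p L \<subseteq> pideal G K p L"
  unfolding pideal_def subconj_def by (blast intro: order_trans)

lemma (in group) pideal_Op_subset:
  assumes fin: "finite (carrier G)" and H: "subgroup H G" and p: "Factorial_Ring.prime p"
    and L: "subgroup L G"
  shows "pideal G (Op G p H) p L \<subseteq> pideal G H p L"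
proof
  fix x assume x: "x \<in> pideal G (Op G p H) p L"
  have "phi G L p I x = 0" if I: "subgroup I G" and IL: "I \<subseteq> L" and "subconj G I H" for I
  proof -
    obtain A where A: "A \<in> normal_p_power_index (G\<lparr>carrier := I\<rparr>) p"
      and "subconj G A (Op G p H)"
      using subconj_imp_normal_p_power_index_subconj_Op[OF fin H p I \<open>subconj G I H\<close>] by blast
    moreover have "subgroup A G" and "A \<subseteq> L"
      using normal_p_power_index_subgroup[OF I A] IL by auto
    ultimately have "phi G L p A x = 0" using x by (auto simp: pideal_def)
    moreover have "phi G L p I x = phi G L p A x"
      using L mark_mod_normal_p_power_index[OF fin L I IL p A] by (rule phi_eq_if_mark_mod_eq)
    ultimately show ?thesis by simp
  qed
  then show "x \<in> pideal G H p L" using x by (auto simp: pideal_def)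
qed

theorem lemma4p15:
  fixes G :: "('a, 'b) monoid_scheme" and H :: "'a set" and p :: nat
  assumes "group G" and "finite (carrier G)" and "subgroup H G" and "Factorial_Ring.prime p"
  shows "\<forall>L. subgroup L G \<longrightarrow> pideal G H p L = pideal G (Op G p H) p L"
proof (intro allI impI)
  fix L assume L: "subgroup L G"
  interpret group G by fact
  have "Op G p H \<subseteq> H"
    using normal_p_power_index_subgroup(2)[OF assms(3) Op_normal_p_power_index[OF assms(2-4)]] .
  then have "pideal G H p L \<subseteq> pideal G (Op G p H) p L" by (rule pideal_antimono)
  moreover have "pideal G (Op G p H) p L \<subseteq> pideal G H p L"
    using assms(2-4) L by (rule pideal_Op_subset)
  ultimately show "pideal G H p L = pideal G (Op G p H) p L" by blast
qed

end
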